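(* Let $X$ be a set. For every continuous order-preserving map $f\colon\mathbb{V}^{\mathrm{c}}([0,1]^X)\to[0,1]$ there exist an at most countable set $Y$, a continuous order-preserving map $s\colon[0,1]^Y\to[0,1]$, a family $(h_y\colon[0,1]^X\to[0,1])_{y\in Y}$ of continuous order-preserving maps, and a family $(\otimes_y)_{y\in Y}$ of elements of $\{\Box,\Diamond\}$ such that $f=s\circ\langle\otimes_y\circ\mathbb{V}^{\mathrm{c}}h_y\rangle_{y\in Y}$.
   Context: $[0,1]^X$ carries the product topology and componentwise order; it is a compact ordered space (a compact Hausdorff space with a partial order closed in the square). For a subset $A$ of a poset, $\uparrow A$, $\downarrow A$ are up- and down-closure; $A$ is convex if $a_1\le x\le a_2$ with $a_i\in A$ implies $x\in A$; $\updownarrow A=\uparrow A\cap\downarrow A$. For a compact ordered space $Z$, $\mathbb{V}^{\mathrm{c}}Z$ is the set of closed convex subsets of $Z$ (including $\varnothing$), with topology generated by $\{K\mid K\cap U\neq\varnothing\}$ and $\{K\mid K\subseteq U\}$ for $U$ an open upset or open downset of $Z$, and Egli–Milner order $K\le L$ iff $\uparrow L\subseteq\uparrow K$ and $\downarrow K\subseteq\downarrow L$; for a continuous order-preserving $h$, $\mathbb{V}^{\mathrm{c}}h(K)=\updownarrow h[K]$. $\Box,\Diamond\colon\mathbb{V}^{\mathrm{c}}([0,1])\to[0,1]$ are $K\mapsto\inf K$ and $K\mapsto\sup K$ (with $\inf\varnothing=1$, $\sup\varnothing=0$). $\langle g_y\rangle_{y\in Y}$ denotes the map into the product induced by a family $(g_y)$.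 *)

theory Defs
  imports "HOL-Analysis.Analysis"
begin

text \<open>The cube [0,1]^X, represented by extensional functions (value 0 outside X),
  with the product topology (subspace of the product topology on 'a => real)
  and the componentwise order.\<close>
definition cube :: "'a set \<Rightarrow> ('a \<Rightarrow> real) set" where
  "cube X = {x. (\<forall>i\<in>X. 0 \<le> x i \<and> x i \<le> 1) \<and> (\<forall>i. i \<notin> X \<longrightarrow> x i = 0)}"

definition up_in :: "'b::order set \<Rightarrow> 'b set \<Rightarrow> 'b set" where
  "up_in Z A = {z\<in>Z. \<exists>a\<in>A. a \<le> z}"

definition down_in :: "'b::order set \<Rightarrow> 'b set \<Rightarrow> 'b set" where
  "down_in Z A = {z\<in>Z. \<exists>a\<in>A. z \<le> a}"

definition updown_in :: "'b::order set \<Rightarrow> 'b set \<Rightarrow> 'b set" where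
  "updown_in Z A = up_in Z A \<inter> down_in Z A"

definition is_upset_in :: "'b::order set \<Rightarrow> 'b set \<Rightarrow> bool" where
  "is_upset_in Z U \<longleftrightarrow> U \<subseteq> Z \<and> (\<forall>u\<in>U. \<forall>z\<in>Z. u \<le> z \<longrightarrow> z \<in> U)"

definition is_downset_in :: "'b::order set \<Rightarrow> 'b set \<Rightarrow> bool" where
  "is_downset_in Z U \<longleftrightarrow> U \<subseteq> Z \<and> (\<forall>u\<in>U. \<forall>z\<in>Z. z \<le> u \<longrightarrow> z \<in> U)"

definition order_convex :: "'b::order set \<Rightarrow> bool" where
  "order_convex A \<longleftrightarrow> (\<forall>a1\<in>A. \<forall>a2\<in>A. \<forall>x. a1 \<le> x \<and> x \<le> a2 \<longrightarrow> x \<in> A)"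

definition Vc :: "'b::{order,topological_space} set \<Rightarrow> 'b set set" where
  "Vc Z = {K. K \<subseteq> Z \<and> closedin (top_of_set Z) K \<and> order_convex K}"

definition open_up_or_down :: "'b::{order,topological_space} set \<Rightarrow> 'b set set" where
  "open_up_or_down Z = {U. openin (top_of_set Z) U \<and> (is_upset_in Z U \<or> is_downset_in Z U)}"

definition Vc_top :: "'b::{order,topological_space} set \<Rightarrow> 'b set topology" where
  "Vc_top Z = topology_generated_by
     ({Vc Z} \<union> (\<Union>U\<in>open_up_or_down Z.
        {{K\<in>Vc Z. K \<inter> U \<noteq> {}}, {K\<in>Vc Z. K \<subseteq> U}}))"

definition egli_milner :: "'b::order set \<Rightarrow> 'b set \<Rightarrow> 'b set \<Rightarrow> bool" where
  "egli_milner Z K L \<longleftrightarrow> up_in Z L \<subseteq> up_in Z K \<and> down_in Z K \<subseteq> down_in Z L"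

definition Vc_map :: "('b \<Rightarrow> real) \<Rightarrow> 'b set \<Rightarrow> real set" where
  "Vc_map h K = updown_in {0..1} (h ` K)"

definition box :: "real set \<Rightarrow> real" where
  "box K = (if K = {} then 1 else Inf K)"

definition diamond :: "real set \<Rightarrow> real" where
  "diamond K = (if K = {} then 0 else Sup K)"

end

theory Submission
  imports Defs
begin

text \<open>Call a function on V^c Z representable if it is a continuous monotone function of countably
  many atoms, each a box or a diamond of the image under a continuous monotone map into [0,1].
  Representable functions contain the constants and the rescaled atoms and are closed under
  binary min and max and under uniform limits at rate 2^-n: the limit of a fast sequence is a
  continuous monotone function of the whole sequence once every step is clamped to its tolerance.
  They are continuous, since on a compact set a box or diamond is an attained minimum or maximum.
  If K is not below L in the Egli-Milner order, some point of one of them escapes the up- or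
  down-closure of the other, and finitely many coordinate ramps (by compactness) give a monotone
  map whose box or diamond is 1 on K and 0 on L. V^c Z is compact by the Alexander subbase
  theorem, so the lattice Stone-Weierstrass theorem approximates any continuous monotone f
  uniformly by representable functions, and the limit represents f itself.\<close>


section \<open>The cube and the space of closed convex sets\<close>

lemma cube_eq_PiE: "cube X = (\<Pi>\<^sub>E i\<in>UNIV. if i \<in> X then {0..1} else {0::real})"
  by (auto simp: cube_def PiE_def Pi_def extensional_UNIV)

lemma compact_cube: "compact (cube X)"
proof -
  have "compactin (product_topology (\<lambda>_. euclidean) UNIV)
          (\<Pi>\<^sub>E i\<in>UNIV. if i \<in> X then {0..1} else {0::real})"
    by (subst compactin_PiE) (auto simp: compactin_euclidean_iff)
  then show ?thesis
    unfolding cube_eq_PiE euclidean_product_topology compactin_euclidean_iff .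
qed

lemma order_convex_cube: "order_convex (cube X)"
  unfolding order_convex_def
proof (intro ballI allI impI)
  fix a1 a2 x assume a: "a1 \<in> cube X" "a2 \<in> cube X" "a1 \<le> x \<and> x \<le> a2"
  have "a1 i \<le> x i" "x i \<le> a2 i" for i
    using a(3) by (auto simp: le_fun_def)
  with a(1,2) show "x \<in> cube X"
    unfolding cube_def by (smt (verit) mem_Collect_eq)
qed

lemma mem_cube_UNIV: "u \<in> cube UNIV \<longleftrightarrow> (\<forall>i. u i \<in> {0..1})"
  by (simp add: cube_def)

lemma continuous_on_coordinate: "continuous_on S (\<lambda>x::'i \<Rightarrow> 'b::topological_space. x i)"
  by (rule continuous_on_subset[OF continuous_on_product_coordinates]) simp

lemma Vc_subset: "K \<in> Vc Z \<Longrightarrow> K \<subseteq> Z"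
  by (simp add: Vc_def)

lemma empty_in_Vc: "{} \<in> Vc Z"
  by (simp add: Vc_def order_convex_def)

lemma compact_Vc: "compact Z \<Longrightarrow> K \<in> Vc Z \<Longrightarrow> compact K"
  unfolding Vc_def closedin_closed by blast

lemma topspace_Vc_top: "topspace (Vc_top Z) = Vc Z"
  unfolding Vc_top_def topology_generated_by_topspace by auto

lemma openin_Vc_top_meets:
  "U \<in> open_up_or_down Z \<Longrightarrow> openin (Vc_top Z) {K\<in>Vc Z. K \<inter> U \<noteq> {}}"
  unfolding Vc_top_def by (rule topology_generated_by_Basis) auto

lemma openin_Vc_top_within:
  "U \<in> open_up_or_down Z \<Longrightarrow> openin (Vc_top Z) {K\<in>Vc Z. K \<subseteq> U}"
  unfolding Vc_top_def by (rule topology_generated_by_Basis) auto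

lemma finite_intersection_of_relative_to_member:
  assumes "V \<in> \<S>" "\<And>S. S \<in> \<S> \<Longrightarrow> S \<subseteq> V"
  shows "(finite intersection_of (\<lambda>S. S \<in> \<S>) relative_to V) = finite' intersection_of (\<lambda>S. S \<in> \<S>)"
proof (intro ext iffI)
  fix T assume "(finite intersection_of (\<lambda>S. S \<in> \<S>) relative_to V) T"
  then obtain \<U> where \<U>: "finite \<U>" "\<U> \<subseteq> \<S>" "T = V \<inter> \<Inter>\<U>"
    unfolding relative_to_def intersection_of_def by auto
  show "(finite' intersection_of (\<lambda>S. S \<in> \<S>)) T"
    unfolding intersection_of_def
  proof (intro exI conjI)
    show "finite (insert V \<U>)" "insert V \<U> \<noteq> {}" "insert V \<U> \<subseteq> {S. S \<in> \<S>}"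
      using \<U> assms(1) by auto
    show "\<Inter>(insert V \<U>) = T"
      using \<U>(3) by simp
  qed
next
  fix T assume "(finite' intersection_of (\<lambda>S. S \<in> \<S>)) T"
  then obtain \<U> where \<U>: "finite \<U>" "\<U> \<noteq> {}" "\<U> \<subseteq> \<S>" "T = \<Inter>\<U>"
    unfolding intersection_of_def by auto
  then have "V \<inter> T = T"
    using assms(2) by blast
  then show "(finite intersection_of (\<lambda>S. S \<in> \<S>) relative_to V) T"
    unfolding relative_to_def intersection_of_def using \<U> by auto
qed

lemma Diff_Union_open_up_or_down_in_Vc:
  assumes "order_convex Z" "\<A> \<subseteq> open_up_or_down Z"
  shows "Z - \<Union>\<A> \<in> Vc Z"
proof -
  have "openin (top_of_set Z) (\<Union>\<A>)"
    using assms(2) by (intro openin_Union) (auto simp: open_up_or_down_def)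
  then have "closedin (top_of_set Z) (Z - \<Union>\<A>)"
    using closedin_diff[OF closedin_topspace[of "top_of_set Z"]] by simp
  moreover have "order_convex (Z - \<Union>\<A>)"
    unfolding order_convex_def
  proof (intro ballI allI impI)
    fix a1 a2 x assume a: "a1 \<in> Z - \<Union>\<A>" "a2 \<in> Z - \<Union>\<A>" "a1 \<le> x \<and> x \<le> a2"
    then have "x \<in> Z"
      using assms(1) by (auto simp: order_convex_def)
    moreover have "x \<notin> U" if "U \<in> \<A>" for U
    proof
      assume "x \<in> U"
      have "is_upset_in Z U \<or> is_downset_in Z U"
        using that assms(2) by (auto simp: open_up_or_down_def)
      then have "a2 \<in> U \<or> a1 \<in> U"
        using \<open>x \<in> U\<close> a by (auto simp: is_upset_in_def is_downset_in_def)
      then show False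
        using that a(1,2) by blast
    qed
    ultimately show "x \<in> Z - \<Union>\<A>"
      by blast
  qed
  ultimately show ?thesis
    by (auto simp: Vc_def)
qed

lemma Vc_finite_cover:
  assumes "compact Z" "openin (top_of_set Z) W" "\<forall>U\<in>\<A>. openin (top_of_set Z) U" "Z - W \<subseteq> \<Union>\<A>"
  shows "\<exists>\<F>\<subseteq>\<A>. finite \<F> \<and> Vc Z \<subseteq> {K. K \<subseteq> W} \<union> (\<Union>U\<in>\<F>. {K. K \<inter> U \<noteq> {}})"
proof -
  obtain T where "open T" "W = Z \<inter> T"
    using assms(2) by (auto simp: openin_open)
  then have "compactin (top_of_set Z) (Z - W)"
    using compact_diff[OF assms(1)] by (auto simp: compactin_subtopology compactin_euclidean_iff Diff_Int)
  then obtain \<F> where \<F>: "finite \<F>" "\<F> \<subseteq> \<A>" "Z - W \<subseteq> \<Union>\<F>"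
    using assms(3,4) unfolding compactin_def by meson
  have "Vc Z \<subseteq> {K. K \<subseteq> W} \<union> (\<Union>U\<in>\<F>. {K. K \<inter> U \<noteq> {}})"
    using \<F>(3) by (auto dest!: Vc_subset)
  then show ?thesis
    using \<F>(1,2) by blast
qed

definition Vc_subbase :: "'b::{order,topological_space} set \<Rightarrow> 'b set set set" where
  "Vc_subbase Z = {Vc Z} \<union> (\<Union>U\<in>open_up_or_down Z. {{K\<in>Vc Z. K \<inter> U \<noteq> {}}, {K\<in>Vc Z. K \<subseteq> U}})"

text \<open>The points of Z outside every member of the form {K. K \<inter> U \<noteq> {}} of the cover form a closed
  convex set lying in no such member, so a member {K. K \<subseteq> W} of the cover encloses it.\<close>
lemma Vc_subbase_cover_within_member:
  assumes "order_convex Z" "\<C> \<subseteq> Vc_subbase Z" "Vc Z \<notin> \<C>" "\<Union>\<C> = Vc Z"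
  obtains W where "W \<in> open_up_or_down Z" "{K\<in>Vc Z. K \<subseteq> W} \<in> \<C>"
    "Z - W \<subseteq> \<Union>{U\<in>open_up_or_down Z. {K\<in>Vc Z. K \<inter> U \<noteq> {}} \<in> \<C>}"
proof -
  let ?\<A> = "{U\<in>open_up_or_down Z. {K\<in>Vc Z. K \<inter> U \<noteq> {}} \<in> \<C>}"
  have "Z - \<Union>?\<A> \<in> Vc Z"
    using assms(1) by (rule Diff_Union_open_up_or_down_in_Vc) auto
  then obtain c where c: "c \<in> \<C>" "Z - \<Union>?\<A> \<in> c"
    using assms(4) by auto
  have "c \<in> Vc_subbase Z" "c \<noteq> Vc Z"
    using c(1) assms(2,3) by auto
  then have "\<exists>U\<in>open_up_or_down Z. c = {K\<in>Vc Z. K \<inter> U \<noteq> {}} \<or> c = {K\<in>Vc Z. K \<subseteq> U}"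
    by (simp add: Vc_subbase_def)
  then obtain U where U: "U \<in> open_up_or_down Z"
    "c = {K\<in>Vc Z. K \<inter> U \<noteq> {}} \<or> c = {K\<in>Vc Z. K \<subseteq> U}"
    by blast
  have "c \<noteq> {K\<in>Vc Z. K \<inter> U \<noteq> {}}"
  proof
    assume meets: "c = {K\<in>Vc Z. K \<inter> U \<noteq> {}}"
    then have "U \<in> ?\<A>"
      using c(1) U(1) by simp
    moreover have "(Z - \<Union>?\<A>) \<inter> U \<noteq> {}"
      using c(2) meets by simp
    ultimately show False
      by blast
  qed
  then have within: "c = {K\<in>Vc Z. K \<subseteq> U}"
    using U(2) by blast
  show thesis
  proof (rule that)
    show "U \<in> open_up_or_down Z"
      by (rule U(1))
    show "{K\<in>Vc Z. K \<subseteq> U} \<in> \<C>"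
      using c(1) within by simp
    show "Z - U \<subseteq> \<Union>?\<A>"
      using c(2) within by auto
  qed
qed

lemma Vc_subbase_finite_subcover:
  assumes "compact Z" "order_convex Z" "\<C> \<subseteq> Vc_subbase Z" "\<Union>\<C> = Vc Z"
  shows "\<exists>\<C>'. finite \<C>' \<and> \<C>' \<subseteq> \<C> \<and> \<Union>\<C>' = Vc Z"
proof (cases "Vc Z \<in> \<C>")
  case True
  then show ?thesis
    by (intro exI[of _ "{Vc Z}"]) auto
next
  case False
  let ?\<A> = "{U\<in>open_up_or_down Z. {K\<in>Vc Z. K \<inter> U \<noteq> {}} \<in> \<C>}"
  obtain W where W: "W \<in> open_up_or_down Z" "{K\<in>Vc Z. K \<subseteq> W} \<in> \<C>" "Z - W \<subseteq> \<Union>?\<A>"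
    by (rule Vc_subbase_cover_within_member[OF assms(2,3) False assms(4)])
  have "openin (top_of_set Z) W" "\<forall>U\<in>?\<A>. openin (top_of_set Z) U"
    using W(1) by (auto simp: open_up_or_down_def)
  then obtain \<F> where \<F>: "\<F> \<subseteq> ?\<A>" "finite \<F>"
      "Vc Z \<subseteq> {K. K \<subseteq> W} \<union> (\<Union>U\<in>\<F>. {K. K \<inter> U \<noteq> {}})"
    using Vc_finite_cover[OF assms(1) _ _ W(3)] by blast
  let ?\<C>' = "insert {K\<in>Vc Z. K \<subseteq> W} ((\<lambda>U. {K\<in>Vc Z. K \<inter> U \<noteq> {}}) ` \<F>)"
  have "?\<C>' \<subseteq> \<C>"
    using W(2) \<F>(1) by auto
  moreover have "\<Union>?\<C>' = Vc Z"
  proof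
    show "\<Union>?\<C>' \<subseteq> Vc Z"
      by auto
    show "Vc Z \<subseteq> \<Union>?\<C>'"
    proof
      fix K assume K: "K \<in> Vc Z"
      then consider "K \<subseteq> W" | U where "U \<in> \<F>" "K \<inter> U \<noteq> {}"
        using \<F>(3) by blast
      then show "K \<in> \<Union>?\<C>'"
        using K by cases auto
    qed
  qed
  ultimately show ?thesis
    using \<F>(2) by (intro exI[of _ ?\<C>']) simp
qed

lemma compact_space_Vc_top:
  assumes "compact Z" "order_convex Z"
  shows "compact_space (Vc_top Z)"
proof (rule Alexander_subbase[where \<B> = "Vc_subbase Z"])
  have "Vc Z \<in> Vc_subbase Z" "\<And>S. S \<in> Vc_subbase Z \<Longrightarrow> S \<subseteq> Vc Z" "\<Union>(Vc_subbase Z) = Vc Z"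
    by (auto simp: Vc_subbase_def)
  then show "topology (arbitrary union_of (finite intersection_of (\<lambda>S. S \<in> Vc_subbase Z)
      relative_to \<Union>(Vc_subbase Z))) = Vc_top Z"
    unfolding Vc_top_def Vc_subbase_def[symmetric] generate_topology_on_eq
    by (simp add: finite_intersection_of_relative_to_member)
next
  fix \<C> assume "\<C> \<subseteq> Vc_subbase Z" "\<Union>\<C> = topspace (Vc_top Z)"
  then show "\<exists>\<C>'. finite \<C>' \<and> \<C>' \<subseteq> \<C> \<and> \<Union>\<C>' = topspace (Vc_top Z)"
    using Vc_subbase_finite_subcover[OF assms] by (simp add: topspace_Vc_top)
qed

section \<open>Boxes and diamonds of monotone maps\<close>

definition cont_mono_unit :: "'b::{order,topological_space} set \<Rightarrow> ('b \<Rightarrow> real) \<Rightarrow> bool" where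
  "cont_mono_unit Z h \<longleftrightarrow> continuous_on Z h \<and> h ` Z \<subseteq> {0..1} \<and> mono_on Z h"

lemma cont_mono_unit_subset: "cont_mono_unit Z h \<Longrightarrow> Z' \<subseteq> Z \<Longrightarrow> cont_mono_unit Z' h"
  unfolding cont_mono_unit_def by (meson continuous_on_subset image_mono mono_on_subset order_trans)

lemma open_up_or_down_superlevel:
  assumes "cont_mono_unit Z h"
  shows "{z\<in>Z. a < h z} \<in> open_up_or_down Z"
proof -
  have "openin (top_of_set Z) {z\<in>Z. a < h z}"
    using assms continuous_openin_preimage_gen[of Z h "{a<..}"]
    by (auto simp: cont_mono_unit_def vimage_def Int_def)
  moreover have "is_upset_in Z {z\<in>Z. a < h z}"
    using assms by (fastforce simp: is_upset_in_def cont_mono_unit_def dest: mono_onD)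
  ultimately show ?thesis
    by (simp add: open_up_or_down_def)
qed

lemma open_up_or_down_sublevel:
  assumes "cont_mono_unit Z h"
  shows "{z\<in>Z. h z < a} \<in> open_up_or_down Z"
proof -
  have "openin (top_of_set Z) {z\<in>Z. h z < a}"
    using assms continuous_openin_preimage_gen[of Z h "{..<a}"]
    by (auto simp: cont_mono_unit_def vimage_def Int_def)
  moreover have "is_downset_in Z {z\<in>Z. h z < a}"
    using assms by (fastforce simp: is_downset_in_def cont_mono_unit_def dest: mono_onD)
  ultimately show ?thesis
    by (simp add: open_up_or_down_def)
qed

lemma box_Vc_map_eq_min:
  assumes "x \<in> K" "\<forall>y\<in>K. h x \<le> h y" "h x \<in> {0..1}"
  shows "box (Vc_map h K) = h x"
proof -
  have "h x \<in> Vc_map h K"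
    using assms(1,3) by (auto simp: Vc_map_def updown_in_def up_in_def down_in_def)
  moreover have "h x \<le> w" if "w \<in> Vc_map h K" for w
    using that assms(2) by (auto simp: Vc_map_def updown_in_def up_in_def intro: order_trans)
  ultimately show ?thesis
    unfolding box_def by (metis cInf_eq_minimum empty_iff)
qed

lemma diamond_Vc_map_eq_max:
  assumes "x \<in> K" "\<forall>y\<in>K. h y \<le> h x" "h x \<in> {0..1}"
  shows "diamond (Vc_map h K) = h x"
proof -
  have "h x \<in> Vc_map h K"
    using assms(1,3) by (auto simp: Vc_map_def updown_in_def up_in_def down_in_def)
  moreover have "w \<le> h x" if "w \<in> Vc_map h K" for w
    using that assms(2) by (auto simp: Vc_map_def updown_in_def down_in_def intro: order_trans)
  ultimately show ?thesis
    unfolding diamond_def by (metis cSup_eq_maximum empty_iff)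
qed

lemma Vc_map_empty [simp]: "Vc_map h {} = {}"
  by (simp add: Vc_map_def updown_in_def up_in_def)

lemma box_Vc_map_attained:
  assumes "compact K" "K \<noteq> {}" "continuous_on K h" "h ` K \<subseteq> {0..1}"
  obtains x where "x \<in> K" "\<forall>y\<in>K. h x \<le> h y" "box (Vc_map h K) = h x"
proof -
  obtain x where x: "x \<in> K" "\<forall>y\<in>K. h x \<le> h y"
    using continuous_attains_inf[OF assms(1-3)] by blast
  have hx: "h x \<in> {0..1}"
    using assms(4) x(1) by auto
  show thesis
    using that[OF x box_Vc_map_eq_min[OF x hx]] .
qed

lemma diamond_Vc_map_attained:
  assumes "compact K" "K \<noteq> {}" "continuous_on K h" "h ` K \<subseteq> {0..1}"
  obtains x where "x \<in> K" "\<forall>y\<in>K. h y \<le> h x" "diamond (Vc_map h K) = h x"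
proof -
  obtain x where x: "x \<in> K" "\<forall>y\<in>K. h y \<le> h x"
    using continuous_attains_sup[OF assms(1-3)] by blast
  have hx: "h x \<in> {0..1}"
    using assms(4) x(1) by auto
  show thesis
    using that[OF x diamond_Vc_map_eq_max[OF x hx]] .
qed

lemma less_box_Vc_map_iff:
  assumes "compact K" "continuous_on K h" "h ` K \<subseteq> {0..1}"
  shows "t < box (Vc_map h K) \<longleftrightarrow> t < 1 \<and> (\<forall>k\<in>K. t < h k)"
proof (cases "K = {}")
  case False
  then obtain x where x: "x \<in> K" "\<forall>y\<in>K. h x \<le> h y" "box (Vc_map h K) = h x"
    using box_Vc_map_attained assms by blast
  have "h x \<le> 1"
    using assms(3) x(1) by auto
  then show ?thesis
    using x by (auto intro: less_le_trans)
qed (simp add: box_def)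

lemma box_Vc_map_less_iff:
  assumes "compact K" "continuous_on K h" "h ` K \<subseteq> {0..1}"
  shows "box (Vc_map h K) < t \<longleftrightarrow> 1 < t \<or> (\<exists>k\<in>K. h k < t)"
proof (cases "K = {}")
  case False
  then obtain x where x: "x \<in> K" "\<forall>y\<in>K. h x \<le> h y" "box (Vc_map h K) = h x"
    using box_Vc_map_attained assms by blast
  have "h x \<le> 1"
    using assms(3) x(1) by auto
  then show ?thesis
    using x by (auto intro: le_less_trans)
qed (simp add: box_def)

lemma less_diamond_Vc_map_iff:
  assumes "compact K" "continuous_on K h" "h ` K \<subseteq> {0..1}"
  shows "t < diamond (Vc_map h K) \<longleftrightarrow> t < 0 \<or> (\<exists>k\<in>K. t < h k)"
proof (cases "K = {}")
  case False
  then obtain x where x: "x \<in> K" "\<forall>y\<in>K. h y \<le> h x" "diamond (Vc_map h K) = h x"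
    using diamond_Vc_map_attained assms by blast
  have "0 \<le> h x"
    using assms(3) x(1) by auto
  then show ?thesis
    using x by (auto intro: less_le_trans)
qed (simp add: diamond_def)

lemma diamond_Vc_map_less_iff:
  assumes "compact K" "continuous_on K h" "h ` K \<subseteq> {0..1}"
  shows "diamond (Vc_map h K) < t \<longleftrightarrow> 0 < t \<and> (\<forall>k\<in>K. h k < t)"
proof (cases "K = {}")
  case False
  then obtain x where x: "x \<in> K" "\<forall>y\<in>K. h y \<le> h x" "diamond (Vc_map h K) = h x"
    using diamond_Vc_map_attained assms by blast
  have "0 \<le> h x"
    using assms(3) x(1) by auto
  then show ?thesis
    using x by (auto intro: le_less_trans)
qed (simp add: diamond_def)

definition modal_atom :: "('b \<Rightarrow> real) \<Rightarrow> bool \<Rightarrow> 'b set \<Rightarrow> real" where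
  "modal_atom h b K = (if b then box else diamond) (Vc_map h K)"

lemma cont_mono_unit_on_Vc:
  assumes "compact Z" "cont_mono_unit Z h" "K \<in> Vc Z"
  shows "compact K" "continuous_on K h" "h ` K \<subseteq> {0..1}"
  using assms Vc_subset[OF assms(3)] compact_Vc[OF assms(1,3)]
  by (auto simp: cont_mono_unit_def intro: continuous_on_subset)

lemma modal_atom_in_unit:
  assumes "compact Z" "cont_mono_unit Z h" "K \<in> Vc Z"
  shows "modal_atom h b K \<in> {0..1}"
proof -
  note K = cont_mono_unit_on_Vc[OF assms]
  have "\<forall>k\<in>K. h k \<in> {0..1}"
    using K(3) by auto
  then have "\<not> box (Vc_map h K) < 0" "\<not> 1 < box (Vc_map h K)"
    "\<not> diamond (Vc_map h K) < 0" "\<not> 1 < diamond (Vc_map h K)"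
    unfolding box_Vc_map_less_iff[OF K] less_box_Vc_map_iff[OF K]
      diamond_Vc_map_less_iff[OF K] less_diamond_Vc_map_iff[OF K] by auto
  then show ?thesis
    by (auto simp: modal_atom_def)
qed

lemma openin_Vc_top_Collect_cong:
  assumes "openin (Vc_top Z) {K\<in>Vc Z. Q K}" "\<And>K. K \<in> Vc Z \<Longrightarrow> P K \<longleftrightarrow> Q K"
  shows "openin (Vc_top Z) {K\<in>Vc Z. P K}"
proof -
  have "{K\<in>Vc Z. P K} = {K\<in>Vc Z. Q K}"
    using assms(2) by blast
  then show ?thesis
    using assms(1) by simp
qed

lemma openin_Vc_top_Vc: "openin (Vc_top Z) (Vc Z)"
  using openin_topspace[of "Vc_top Z"] by (simp add: topspace_Vc_top)

lemma openin_Vc_top_less_modal_atom: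
  assumes "compact Z" "cont_mono_unit Z h"
  shows "openin (Vc_top Z) {K\<in>Vc Z. a < modal_atom h b K}"
proof (cases b)
  case True
  have "openin (Vc_top Z) {K\<in>Vc Z. a < 1 \<and> K \<subseteq> {z\<in>Z. a < h z}}"
    using openin_Vc_top_within[OF open_up_or_down_superlevel[OF assms(2)]] by (cases "a < 1") simp_all
  then show ?thesis
  proof (rule openin_Vc_top_Collect_cong)
    fix K assume "K \<in> Vc Z"
    then show "a < modal_atom h b K \<longleftrightarrow> a < 1 \<and> K \<subseteq> {z\<in>Z. a < h z}"
      using True less_box_Vc_map_iff[OF cont_mono_unit_on_Vc[OF assms]] Vc_subset[of K Z]
      by (auto simp: modal_atom_def)
  qed
next
  case False
  have "openin (Vc_top Z) {K\<in>Vc Z. a < 0 \<or> K \<inter> {z\<in>Z. a < h z} \<noteq> {}}"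
    using openin_Vc_top_meets[OF open_up_or_down_superlevel[OF assms(2)]] openin_Vc_top_Vc
    by (cases "a < 0") simp_all
  then show ?thesis
  proof (rule openin_Vc_top_Collect_cong)
    fix K assume "K \<in> Vc Z"
    then show "a < modal_atom h b K \<longleftrightarrow> a < 0 \<or> K \<inter> {z\<in>Z. a < h z} \<noteq> {}"
      using False less_diamond_Vc_map_iff[OF cont_mono_unit_on_Vc[OF assms]] Vc_subset[of K Z]
      by (auto simp: modal_atom_def)
  qed
qed

lemma openin_Vc_top_modal_atom_less:
  assumes "compact Z" "cont_mono_unit Z h"
  shows "openin (Vc_top Z) {K\<in>Vc Z. modal_atom h b K < a}"
proof (cases b)
  case True
  have "openin (Vc_top Z) {K\<in>Vc Z. 1 < a \<or> K \<inter> {z\<in>Z. h z < a} \<noteq> {}}"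
    using openin_Vc_top_meets[OF open_up_or_down_sublevel[OF assms(2)]] openin_Vc_top_Vc
    by (cases "1 < a") simp_all
  then show ?thesis
  proof (rule openin_Vc_top_Collect_cong)
    fix K assume "K \<in> Vc Z"
    then show "modal_atom h b K < a \<longleftrightarrow> 1 < a \<or> K \<inter> {z\<in>Z. h z < a} \<noteq> {}"
      using True box_Vc_map_less_iff[OF cont_mono_unit_on_Vc[OF assms]] Vc_subset[of K Z]
      by (auto simp: modal_atom_def)
  qed
next
  case False
  have "openin (Vc_top Z) {K\<in>Vc Z. 0 < a \<and> K \<subseteq> {z\<in>Z. h z < a}}"
    using openin_Vc_top_within[OF open_up_or_down_sublevel[OF assms(2)]] by (cases "0 < a") simp_all
  then show ?thesis
  proof (rule openin_Vc_top_Collect_cong)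
    fix K assume "K \<in> Vc Z"
    then show "modal_atom h b K < a \<longleftrightarrow> 0 < a \<and> K \<subseteq> {z\<in>Z. h z < a}"
      using False diamond_Vc_map_less_iff[OF cont_mono_unit_on_Vc[OF assms]] Vc_subset[of K Z]
      by (auto simp: modal_atom_def)
  qed
qed

lemma continuous_map_modal_atom:
  assumes "compact Z" "cont_mono_unit Z h"
  shows "continuous_map (Vc_top Z) euclideanreal (modal_atom h b)"
  unfolding continuous_map_upper_lower_semicontinuous_lt topspace_Vc_top
  using openin_Vc_top_less_modal_atom[OF assms] openin_Vc_top_modal_atom_less[OF assms] by blast

section \<open>Separation by monotone maps\<close>

lemma compact_coordinate_threshold_cover:
  fixes p :: "'i \<Rightarrow> real" and C :: "('i \<Rightarrow> real) set"
  assumes "compact C" "\<forall>c\<in>C. \<not> c \<le> p"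
  obtains D :: "('i \<Rightarrow> real) set" and I b where "finite D" "\<And>d. d \<in> D \<Longrightarrow> p (I d) < b d"
    "C \<subseteq> (\<Union>d\<in>D. {z. b d < z (I d)})"
proof -
  have "\<forall>c\<in>C. \<exists>i. p i < c i"
    using assms(2) by (auto simp: le_fun_def not_le)
  then obtain I where I: "\<And>c. c \<in> C \<Longrightarrow> p (I c) < c (I c)"
    by metis
  define b where "b c = (p (I c) + c (I c)) / 2" for c
  have b: "p (I c) < b c" "b c < c (I c)" if "c \<in> C" for c
    using I[OF that] by (auto simp: b_def)
  obtain D where D: "D \<subseteq> C" "finite D" "C \<subseteq> (\<Union>d\<in>D. {z. b d < z (I d)})"
  proof (rule compactE_image[OF assms(1)])
    show "open {z. b c < z (I c)}" for c :: "'i \<Rightarrow> real"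
      by (rule open_Collect_less) (simp_all add: continuous_on_coordinate)
    show "C \<subseteq> (\<Union>c\<in>C. {z. b c < z (I c)})"
      using b(2) by blast
  qed
  show thesis
    by (rule that[OF D(2) _ D(3)]) (use b(1) D(1) in auto)
qed

lemma exists_cont_mono_separating_up:
  fixes p :: "'i \<Rightarrow> real" and C :: "('i \<Rightarrow> real) set"
  assumes "compact C" "\<forall>c\<in>C. \<not> c \<le> p"
  shows "\<exists>h. cont_mono_unit UNIV h \<and> h p = 0 \<and> (\<forall>c\<in>C. h c = 1)"
proof -
  obtain D :: "('i \<Rightarrow> real) set" and I b where "finite D"
    and threshold: "\<And>d. d \<in> D \<Longrightarrow> p (I d) < b d" and "C \<subseteq> (\<Union>d\<in>D. {z. b d < z (I d)})"
    using compact_coordinate_threshold_cover[OF assms] by blast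
  note D = \<open>finite D\<close> \<open>C \<subseteq> (\<Union>d\<in>D. {z. b d < z (I d)})\<close>
  have pos: "0 < b d - p (I d)" if "d \<in> D" for d
    using threshold[OF that] by simp
  define ramp where "ramp d z = max 0 (min 1 ((z (I d) - p (I d)) / (b d - p (I d))))" for d z
  define h where "h z = min 1 (\<Sum>d\<in>D. ramp d z)" for z
  have "continuous_on UNIV h"
    unfolding h_def ramp_def
    by (intro continuous_intros continuous_on_coordinate) (auto dest: pos)
  moreover have "h ` UNIV \<subseteq> {0..1}"
    by (auto simp: h_def ramp_def intro!: sum_nonneg)
  moreover have "mono_on UNIV h"
  proof (rule mono_onI)
    fix u v :: "'i \<Rightarrow> real" assume "u \<le> v"
    then have "ramp d u \<le> ramp d v" if "d \<in> D" for d
      using pos[OF that] unfolding ramp_def le_fun_def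
      by (intro max.mono min.mono order_refl divide_right_mono diff_right_mono) auto
    then show "h u \<le> h v"
      unfolding h_def by (intro min.mono order_refl sum_mono)
  qed
  moreover have "h p = 0"
    by (simp add: h_def ramp_def)
  moreover have "h c = 1" if c: "c \<in> C" for c
  proof -
    obtain d where d: "d \<in> D" "b d < c (I d)"
      using D(2) c by blast
    then have "ramp d c = 1"
      using pos[OF d(1)] by (simp add: ramp_def)
    moreover have "ramp d c \<le> (\<Sum>d\<in>D. ramp d c)"
      using d(1) D(1) by (intro member_le_sum) (auto simp: ramp_def)
    ultimately show ?thesis
      by (simp add: h_def)
  qed
  ultimately show ?thesis
    unfolding cont_mono_unit_def by blast
qed

lemma exists_cont_mono_separating_down:
  fixes p :: "'i \<Rightarrow> real" and C :: "('i \<Rightarrow> real) set"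
  assumes "compact C" "\<forall>c\<in>C. \<not> p \<le> c"
  shows "\<exists>h. cont_mono_unit UNIV h \<and> h p = 1 \<and> (\<forall>c\<in>C. h c = 0)"
proof -
  define neg :: "('i \<Rightarrow> real) \<Rightarrow> 'i \<Rightarrow> real" where "neg z = (\<lambda>i. - z i)" for z
  have neg_cont: "continuous_on UNIV neg"
    unfolding neg_def by (intro continuous_intros continuous_on_coordinate)
  have neg_le_iff: "neg u \<le> neg v \<longleftrightarrow> v \<le> u" for u v
    by (auto simp: neg_def le_fun_def)
  have "compact (neg ` C)"
    using compact_continuous_image[OF continuous_on_subset[OF neg_cont] assms(1)] by simp
  moreover have "\<forall>c\<in>neg ` C. \<not> c \<le> neg p"
    using assms(2) neg_le_iff by auto
  ultimately obtain g where g: "cont_mono_unit UNIV g" "g (neg p) = 0" "\<forall>c\<in>neg ` C. g c = 1"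
    by (blast dest: exists_cont_mono_separating_up)
  define h where "h z = 1 - g (neg z)" for z
  have "continuous_on UNIV h"
    unfolding h_def using g(1)
    by (intro continuous_intros continuous_on_compose2[OF _ neg_cont]) (auto simp: cont_mono_unit_def)
  moreover have "h ` UNIV \<subseteq> {0..1}"
    using g(1) by (auto simp: cont_mono_unit_def h_def image_subset_iff)
  moreover have "mono_on UNIV h"
  proof (rule mono_onI)
    fix u v :: "'i \<Rightarrow> real" assume "u \<le> v"
    then have "g (neg v) \<le> g (neg u)"
      using g(1) neg_le_iff mono_onD[of UNIV g "neg v" "neg u"] by (simp add: cont_mono_unit_def)
    then show "h u \<le> h v"
      by (simp add: h_def)
  qed
  ultimately show ?thesis
    using g(2,3) unfolding cont_mono_unit_def by (intro exI[of _ h]) (simp add: h_def)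
qed

lemma modal_atom_separates:
  fixes Z :: "('i \<Rightarrow> real) set"
  assumes "compact Z" "K \<in> Vc Z" "L \<in> Vc Z" "\<not> egli_milner Z K L"
  shows "\<exists>h b. cont_mono_unit Z h \<and> modal_atom h b K = 1 \<and> modal_atom h b L = 0"
proof (cases "up_in Z L \<subseteq> up_in Z K")
  case False
  then obtain z l where l: "l \<in> L" "l \<le> z" "\<forall>k\<in>K. \<not> k \<le> z"
    by (auto simp: up_in_def)
  then have "\<forall>k\<in>K. \<not> k \<le> l"
    using order_trans by blast
  then obtain h where h: "cont_mono_unit UNIV h" "h l = 0" "\<forall>k\<in>K. h k = 1"
    using exists_cont_mono_separating_up[OF compact_Vc[OF assms(1,2)]] by blast
  then have hZ: "cont_mono_unit Z h"
    using cont_mono_unit_subset by blast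
  note K = cont_mono_unit_on_Vc[OF assms(1) hZ assms(2)]
  note L = cont_mono_unit_on_Vc[OF assms(1) hZ assms(3)]
  have "\<not> box (Vc_map h K) < 1" "\<not> 1 < box (Vc_map h K)"
    using h(3) unfolding box_Vc_map_less_iff[OF K] less_box_Vc_map_iff[OF K] by auto
  moreover have "\<not> box (Vc_map h L) < 0" "\<not> 0 < box (Vc_map h L)"
    using L(3) h(2) l(1) unfolding box_Vc_map_less_iff[OF L] less_box_Vc_map_iff[OF L] by fastforce+
  ultimately show ?thesis
    using hZ by (intro exI[of _ h] exI[of _ True]) (simp add: modal_atom_def)
next
  case True
  then have "\<not> down_in Z K \<subseteq> down_in Z L"
    using assms(4) by (simp add: egli_milner_def)
  then obtain z k where k: "k \<in> K" "z \<le> k" "\<forall>l\<in>L. \<not> z \<le> l"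
    by (auto simp: down_in_def)
  then have "\<forall>l\<in>L. \<not> k \<le> l"
    using order_trans by blast
  then obtain h where h: "cont_mono_unit UNIV h" "h k = 1" "\<forall>l\<in>L. h l = 0"
    using exists_cont_mono_separating_down[OF compact_Vc[OF assms(1,3)]] by blast
  then have hZ: "cont_mono_unit Z h"
    using cont_mono_unit_subset by blast
  note K = cont_mono_unit_on_Vc[OF assms(1) hZ assms(2)]
  note L = cont_mono_unit_on_Vc[OF assms(1) hZ assms(3)]
  have "\<not> diamond (Vc_map h K) < 1" "\<not> 1 < diamond (Vc_map h K)"
    using K(3) h(2) k(1) unfolding diamond_Vc_map_less_iff[OF K] less_diamond_Vc_map_iff[OF K] by fastforce+
  moreover have "\<not> diamond (Vc_map h L) < 0" "\<not> 0 < diamond (Vc_map h L)"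
    using h(3) unfolding diamond_Vc_map_less_iff[OF L] less_diamond_Vc_map_iff[OF L] by auto
  ultimately show ?thesis
    using hZ by (intro exI[of _ h] exI[of _ False]) (simp add: modal_atom_def)
qed

section \<open>Representable functions\<close>

definition modal_representable :: "'b::{order,topological_space} set \<Rightarrow> ('b set \<Rightarrow> real) \<Rightarrow> bool" where
  "modal_representable Z F \<longleftrightarrow>
     (\<exists>h b \<sigma>. (\<forall>j::nat. cont_mono_unit Z (h j)) \<and> cont_mono_unit (cube UNIV) \<sigma>
        \<and> (\<forall>K\<in>Vc Z. F K = \<sigma> (\<lambda>j. modal_atom (h j) (b j) K)))"

lemma modal_representable_cong:
  assumes "modal_representable Z F" "\<And>K. K \<in> Vc Z \<Longrightarrow> F K = G K"
  shows "modal_representable Z G"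
proof -
  obtain h b \<sigma> where "\<forall>j::nat. cont_mono_unit Z (h j)" "cont_mono_unit (cube UNIV) \<sigma>"
      "\<forall>K\<in>Vc Z. F K = \<sigma> (\<lambda>j. modal_atom (h j) (b j) K)"
    using assms(1) unfolding modal_representable_def by blast
  then show ?thesis
    unfolding modal_representable_def using assms(2) by (intro exI[of _ h] exI[of _ b] exI[of _ \<sigma>]) simp
qed

lemma cont_mono_unit_compose:
  assumes "cont_mono_unit B \<Psi>" "continuous_on A R" "R ` A \<subseteq> B" "mono_on A R"
  shows "cont_mono_unit A (\<lambda>u. \<Psi> (R u))"
  unfolding cont_mono_unit_def
proof (intro conjI)
  show "continuous_on A (\<lambda>u. \<Psi> (R u))"
    using assms(1-3) by (auto simp: cont_mono_unit_def intro: continuous_on_compose2)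
  show "(\<lambda>u. \<Psi> (R u)) ` A \<subseteq> {0..1}"
    using assms(1,3) by (auto simp: cont_mono_unit_def)
  show "mono_on A (\<lambda>u. \<Psi> (R u))"
  proof (rule mono_onI)
    fix r s assume "r \<in> A" "s \<in> A" "r \<le> s"
    then have "R r \<le> R s" "R r \<in> B" "R s \<in> B"
      using assms(3,4) by (auto dest: mono_onD)
    then show "\<Psi> (R r) \<le> \<Psi> (R s)"
      using assms(1) by (auto simp: cont_mono_unit_def dest: mono_onD)
  qed
qed

lemma cont_mono_unit_reindex:
  assumes "cont_mono_unit (cube UNIV) \<sigma>"
  shows "cont_mono_unit (cube UNIV) (\<lambda>u::nat \<Rightarrow> real. \<sigma> (\<lambda>j. u (g j)))"
proof (rule cont_mono_unit_compose[OF assms])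
  show "continuous_on (cube UNIV) (\<lambda>u::nat \<Rightarrow> real. \<lambda>j. u (g j))"
    by (intro continuous_intros continuous_on_coordinate)
  show "(\<lambda>u::nat \<Rightarrow> real. \<lambda>j. u (g j)) ` cube UNIV \<subseteq> cube UNIV"
    by (auto simp: mem_cube_UNIV)
  show "mono_on (cube UNIV) (\<lambda>u::nat \<Rightarrow> real. \<lambda>j. u (g j))"
    by (auto simp: le_fun_def intro: mono_onI)
qed

text \<open>Countably many representations are merged into one by interleaving their atoms
  along the pairing bijection.\<close>
lemma modal_representable_compose:
  fixes F :: "nat \<Rightarrow> 'b::{order,topological_space} set \<Rightarrow> real"
  assumes "\<And>n. modal_representable Z (F n)" "cont_mono_unit (cube UNIV) \<Psi>"
  shows "modal_representable Z (\<lambda>K. \<Psi> (\<lambda>n. F n K))"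
proof -
  have "\<forall>n. \<exists>h b \<sigma>. (\<forall>j::nat. cont_mono_unit Z (h j)) \<and> cont_mono_unit (cube UNIV) \<sigma>
          \<and> (\<forall>K\<in>Vc Z. F n K = \<sigma> (\<lambda>j. modal_atom (h j) (b j) K))"
    using assms(1) by (simp add: modal_representable_def)
  then obtain h :: "nat \<Rightarrow> nat \<Rightarrow> 'b \<Rightarrow> real" and b :: "nat \<Rightarrow> nat \<Rightarrow> bool"
    and \<sigma> :: "nat \<Rightarrow> (nat \<Rightarrow> real) \<Rightarrow> real" where hb\<sigma>: "\<And>n j. cont_mono_unit Z (h n j)" "\<And>n. cont_mono_unit (cube UNIV) (\<sigma> n)"
      "\<And>n K. K \<in> Vc Z \<Longrightarrow> F n K = \<sigma> n (\<lambda>j. modal_atom (h n j) (b n j) K)"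
    by metis
  define R where "R u = (\<lambda>n. \<sigma> n (\<lambda>j. u (prod_encode (n, j))))" for u :: "nat \<Rightarrow> real"
  have "cont_mono_unit (cube UNIV) (\<lambda>u. \<Psi> (R u))"
  proof (rule cont_mono_unit_compose[OF assms(2)])
    have \<sigma>': "cont_mono_unit (cube UNIV) (\<lambda>u::nat \<Rightarrow> real. \<sigma> n (\<lambda>j. u (prod_encode (n, j))))" for n
      by (rule cont_mono_unit_reindex[OF hb\<sigma>(2)])
    then show "continuous_on (cube UNIV) R"
      unfolding R_def cont_mono_unit_def by (intro continuous_on_coordinatewise_then_product) blast
    show "R ` cube UNIV \<subseteq> cube UNIV"
    proof (rule image_subsetI)
      fix u :: "nat \<Rightarrow> real" assume "u \<in> cube UNIV"
      then have "\<sigma> n (\<lambda>j. u (prod_encode (n, j))) \<in> {0..1}" for n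
        using \<sigma>'[of n] unfolding cont_mono_unit_def by blast
      then show "R u \<in> cube UNIV"
        unfolding mem_cube_UNIV R_def by blast
    qed
    show "mono_on (cube UNIV) R"
    proof (rule mono_onI)
      fix u v :: "nat \<Rightarrow> real" assume uv: "u \<in> cube UNIV" "v \<in> cube UNIV" "u \<le> v"
      have "\<sigma> n (\<lambda>j. u (prod_encode (n, j))) \<le> \<sigma> n (\<lambda>j. v (prod_encode (n, j)))" for n
        using \<sigma>'[of n] mono_onD[OF _ uv, of "\<lambda>u. \<sigma> n (\<lambda>j. u (prod_encode (n, j)))"]
        by (simp add: cont_mono_unit_def)
      then show "R u \<le> R v"
        by (simp add: R_def le_fun_def)
    qed
  qed
  moreover have "\<Psi> (\<lambda>n. F n K) = \<Psi> (R (\<lambda>j. modal_atom (case_prod h (prod_decode j)) (case_prod b (prod_decode j)) K))"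
    if "K \<in> Vc Z" for K
    using hb\<sigma>(3)[OF that] by (simp add: R_def)
  ultimately show ?thesis
    unfolding modal_representable_def using hb\<sigma>(1)
    by (intro exI[of _ "\<lambda>j. case_prod h (prod_decode j)"] exI[of _ "\<lambda>j. case_prod b (prod_decode j)"]
        exI[of _ "\<lambda>u. \<Psi> (R u)"]) (simp add: split_beta)
qed

lemma modal_representable_const:
  assumes "c \<in> {0..1}"
  shows "modal_representable Z (\<lambda>K. c)"
  unfolding modal_representable_def using assms
  by (intro exI[of _ "\<lambda>_ _. 0"] exI[of _ "\<lambda>_. True"] exI[of _ "\<lambda>_. c"])
     (auto simp: cont_mono_unit_def mono_on_def)

lemma modal_representable_affine_atom:
  assumes "cont_mono_unit Z h" "0 \<le> a" "0 \<le> c" "a + c \<le> 1"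
  shows "modal_representable Z (\<lambda>K. a + c * modal_atom h b K)"
proof -
  have "cont_mono_unit (cube UNIV) (\<lambda>u::nat \<Rightarrow> real. a + c * u 0)"
    unfolding cont_mono_unit_def
  proof (intro conjI)
    show "continuous_on (cube UNIV) (\<lambda>u::nat \<Rightarrow> real. a + c * u 0)"
      by (intro continuous_intros continuous_on_coordinate)
    have "a + c * t \<in> {0..1}" if "t \<in> {0..1}" for t
      using assms(2-4) that mult_left_le[of t c] by auto
    then show "(\<lambda>u::nat \<Rightarrow> real. a + c * u 0) ` cube UNIV \<subseteq> {0..1}"
      by (auto simp: mem_cube_UNIV)
    show "mono_on (cube UNIV) (\<lambda>u::nat \<Rightarrow> real. a + c * u 0)"
      using assms(3) by (auto simp: le_fun_def intro!: mono_onI mult_left_mono)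
  qed
  then show ?thesis
    unfolding modal_representable_def using assms(1)
    by (intro exI[of _ "\<lambda>_. h"] exI[of _ "\<lambda>_. b"] exI[of _ "\<lambda>u. a + c * u 0"]) simp
qed

lemma modal_representable_binop:
  assumes "modal_representable Z F" "modal_representable Z G"
    and "cont_mono_unit (cube UNIV) (\<lambda>u::nat \<Rightarrow> real. \<phi> (u 0) (u 1))"
  shows "modal_representable Z (\<lambda>K. \<phi> (F K) (G K))"
  using modal_representable_compose[of Z "\<lambda>n. if n = 0 then F else G", OF _ assms(3)] assms(1,2)
  by simp

lemma modal_representable_min:
  assumes "modal_representable Z F" "modal_representable Z G"
  shows "modal_representable Z (\<lambda>K. min (F K) (G K))"
proof (rule modal_representable_binop[OF assms])
  show "cont_mono_unit (cube UNIV) (\<lambda>u::nat \<Rightarrow> real. min (u 0) (u 1))"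
    by (auto simp: cont_mono_unit_def mem_cube_UNIV le_fun_def min_le_iff_disj
        intro!: continuous_intros continuous_on_coordinate mono_onI min.mono)
qed

lemma modal_representable_max:
  assumes "modal_representable Z F" "modal_representable Z G"
  shows "modal_representable Z (\<lambda>K. max (F K) (G K))"
proof (rule modal_representable_binop[OF assms])
  show "cont_mono_unit (cube UNIV) (\<lambda>u::nat \<Rightarrow> real. max (u 0) (u 1))"
    by (auto simp: cont_mono_unit_def mem_cube_UNIV le_fun_def le_max_iff_disj
        intro!: continuous_intros continuous_on_coordinate mono_onI max.mono)
qed

lemma continuous_map_modal_representable:
  assumes "compact Z" "modal_representable Z F"
  shows "continuous_map (Vc_top Z) euclideanreal F"
proof -
  obtain h b \<sigma> where h: "\<forall>j::nat. cont_mono_unit Z (h j)" and \<sigma>: "cont_mono_unit (cube UNIV) \<sigma>"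
    and F: "\<forall>K\<in>Vc Z. F K = \<sigma> (\<lambda>j. modal_atom (h j) (b j) K)"
    using assms(2) unfolding modal_representable_def by blast
  define A where "A K = (\<lambda>j. modal_atom (h j) (b j) K)" for K
  have "continuous_map (Vc_top Z) euclidean A"
    unfolding A_def euclidean_product_topology[symmetric] continuous_map_componentwise_UNIV
    using continuous_map_modal_atom[OF assms(1) h[rule_format]] by blast
  moreover have "A \<in> topspace (Vc_top Z) \<rightarrow> cube UNIV"
    using modal_atom_in_unit[OF assms(1) h[rule_format]] by (auto simp: A_def topspace_Vc_top mem_cube_UNIV)
  ultimately have "continuous_map (Vc_top Z) (top_of_set (cube UNIV)) A"
    by (simp add: continuous_map_in_subtopology)
  moreover have "continuous_map (top_of_set (cube UNIV)) euclideanreal \<sigma>"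
    using \<sigma> by (simp add: cont_mono_unit_def)
  ultimately have "continuous_map (Vc_top Z) euclideanreal (\<sigma> \<circ> A)"
    by (rule continuous_map_compose)
  then show ?thesis
    by (rule continuous_map_eq) (simp add: F A_def topspace_Vc_top)
qed

section \<open>Lattice approximation\<close>

lemma compact_space_pointwise_cover:
  assumes "compact_space T" "\<And>x. x \<in> topspace T \<Longrightarrow> openin T (U x) \<and> x \<in> U x"
  obtains D where "finite D" "D \<subseteq> topspace T" "topspace T \<subseteq> (\<Union>x\<in>D. U x)"
proof -
  have "compactin T (topspace T)" "\<forall>V\<in>U ` topspace T. openin T V" "topspace T \<subseteq> \<Union>(U ` topspace T)"
    using assms by (auto simp: compact_space_def)
  then obtain \<F> where "finite \<F>" "\<F> \<subseteq> U ` topspace T" "topspace T \<subseteq> \<Union>\<F>"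
    unfolding compactin_def by meson
  then obtain D where "D \<subseteq> topspace T" "finite D" "\<F> = U ` D"
    using finite_subset_image by meson
  then show thesis
    using that \<open>topspace T \<subseteq> \<Union>\<F>\<close> by blast
qed

lemma openin_diff_less:
  assumes "continuous_map T euclideanreal F" "continuous_map T euclideanreal G"
  shows "openin T {x \<in> topspace T. F x - G x < \<epsilon>}"
  using openin_continuous_map_preimage[OF continuous_map_diff[OF assms], of "{..<\<epsilon>}"] by simp

lemma Min_closed:
  assumes "\<And>F G. P F \<Longrightarrow> P G \<Longrightarrow> P (\<lambda>x. min (F x) (G x))" "finite D" "D \<noteq> {}" "\<And>d. d \<in> D \<Longrightarrow> P (G d)"
  shows "P (\<lambda>x. MIN d\<in>D. G d x)"
  using assms(2-4)
proof (induction D rule: finite_ne_induct)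
  case (insert d D)
  then show ?case
    using assms(1)[of "G d" "\<lambda>x. MIN d\<in>D. G d x"] by simp
qed simp

lemma Max_closed:
  assumes "\<And>F G. P F \<Longrightarrow> P G \<Longrightarrow> P (\<lambda>x. max (F x) (G x))" "finite D" "D \<noteq> {}" "\<And>d. d \<in> D \<Longrightarrow> P (G d)"
  shows "P (\<lambda>x. MAX d\<in>D. G d x)"
  using assms(2-4)
proof (induction D rule: finite_ne_induct)
  case (insert d D)
  then show ?case
    using assms(1)[of "G d" "\<lambda>x. MAX d\<in>D. G d x"] by simp
qed simp

lemma lattice_upper_approximation:
  fixes T :: "'x topology" and P :: "('x \<Rightarrow> real) \<Rightarrow> bool"
  assumes "compact_space T"
    and cont: "\<And>F. P F \<Longrightarrow> continuous_map T euclideanreal F"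
    and min: "\<And>F G. P F \<Longrightarrow> P G \<Longrightarrow> P (\<lambda>x. min (F x) (G x))"
    and interpolate: "\<And>x y. x \<in> topspace T \<Longrightarrow> y \<in> topspace T \<Longrightarrow> \<exists>F. P F \<and> F x = f x \<and> F y \<le> f y"
    and f: "continuous_map T euclideanreal f" and "0 < \<epsilon>" and x: "x \<in> topspace T"
  shows "\<exists>H. P H \<and> H x = f x \<and> (\<forall>y\<in>topspace T. H y < f y + \<epsilon>)"
proof -
  obtain G where G: "\<And>y. y \<in> topspace T \<Longrightarrow> P (G y) \<and> G y x = f x \<and> G y y \<le> f y"
    using interpolate[OF x] by metis
  define U where "U y = {z \<in> topspace T. G y z - f z < \<epsilon>}" for y
  have "openin T (U y) \<and> y \<in> U y" if "y \<in> topspace T" for y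
    using openin_diff_less[OF cont f] G[OF that] that \<open>0 < \<epsilon>\<close> unfolding U_def by auto
  then obtain D where D: "finite D" "D \<subseteq> topspace T" "topspace T \<subseteq> (\<Union>y\<in>D. U y)"
    using compact_space_pointwise_cover[OF assms(1)] by metis
  then have "D \<noteq> {}"
    using x by blast
  define H where "H z = (MIN y\<in>D. G y z)" for z
  have "P H"
    unfolding H_def using min D(1) \<open>D \<noteq> {}\<close> by (rule Min_closed) (auto dest: subsetD[OF D(2)] G)
  moreover have "H x = f x"
    using G D(2) \<open>D \<noteq> {}\<close> by (simp add: H_def subset_iff image_constant_conv cong: image_cong)
  moreover have "H z < f z + \<epsilon>" if z: "z \<in> topspace T" for z
  proof -
    obtain y where y: "y \<in> D" "z \<in> U y"
      using D(3) z by blast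
    then have "H z \<le> G y z"
      using D(1) by (simp add: H_def)
    also have "\<dots> < f z + \<epsilon>"
      using y(2) by (simp add: U_def)
    finally show ?thesis .
  qed
  ultimately show ?thesis
    by blast
qed

text \<open>The lattice version of the Stone-Weierstrass theorem (Kakutani-Krein).\<close>
lemma lattice_approximation:
  fixes T :: "'x topology" and P :: "('x \<Rightarrow> real) \<Rightarrow> bool"
  assumes "compact_space T" "topspace T \<noteq> {}"
    and cont: "\<And>F. P F \<Longrightarrow> continuous_map T euclideanreal F"
    and min: "\<And>F G. P F \<Longrightarrow> P G \<Longrightarrow> P (\<lambda>x. min (F x) (G x))"
    and max: "\<And>F G. P F \<Longrightarrow> P G \<Longrightarrow> P (\<lambda>x. max (F x) (G x))"
    and interpolate: "\<And>x y. x \<in> topspace T \<Longrightarrow> y \<in> topspace T \<Longrightarrow> \<exists>F. P F \<and> F x = f x \<and> F y \<le> f y"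
    and f: "continuous_map T euclideanreal f" and "0 < \<epsilon>"
  shows "\<exists>F. P F \<and> (\<forall>x\<in>topspace T. \<bar>F x - f x\<bar> < \<epsilon>)"
proof -
  obtain H where H: "\<And>x. x \<in> topspace T \<Longrightarrow> P (H x) \<and> H x x = f x \<and> (\<forall>y\<in>topspace T. H x y < f y + \<epsilon>)"
    using lattice_upper_approximation[OF assms(1) cont min interpolate f \<open>0 < \<epsilon>\<close>] by metis
  define U where "U x = {z \<in> topspace T. f z - H x z < \<epsilon>}" for x
  have "openin T (U x) \<and> x \<in> U x" if "x \<in> topspace T" for x
    using openin_diff_less[OF f cont] H[OF that] that \<open>0 < \<epsilon>\<close> unfolding U_def by auto
  then obtain D where D: "finite D" "D \<subseteq> topspace T" "topspace T \<subseteq> (\<Union>x\<in>D. U x)"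
    using compact_space_pointwise_cover[OF assms(1)] by metis
  then have "D \<noteq> {}"
    using assms(2) by blast
  define F where "F z = (MAX x\<in>D. H x z)" for z
  have "P F"
    unfolding F_def using max D(1) \<open>D \<noteq> {}\<close> by (rule Max_closed) (auto dest: subsetD[OF D(2)] H)
  moreover have "\<bar>F z - f z\<bar> < \<epsilon>" if z: "z \<in> topspace T" for z
  proof -
    have upper: "F z < f z + \<epsilon>"
      unfolding F_def using D(1) \<open>D \<noteq> {}\<close> H D(2) z by (subst Max_less_iff) auto
    obtain x where x: "x \<in> D" "z \<in> U x"
      using D(3) z by blast
    then have "f z - \<epsilon> < H x z"
      by (simp add: U_def)
    also have "H x z \<le> F z"
      using D(1) x(1) by (simp add: F_def)
    finally show ?thesis
      using upper by linarith
  qed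
  ultimately show ?thesis
    by blast
qed

section \<open>Limits of fast sequences\<close>

primrec clamped_seq :: "(nat \<Rightarrow> real) \<Rightarrow> (nat \<Rightarrow> real) \<Rightarrow> nat \<Rightarrow> real" where
  "clamped_seq e v 0 = v 0"
| "clamped_seq e v (Suc n) = max (min (v (Suc n)) (clamped_seq e v n + e n)) (clamped_seq e v n - e n)"

lemma continuous_on_clamped_seq: "continuous_on S (\<lambda>v. clamped_seq e v n)"
  by (induction n) (simp_all add: continuous_on_coordinate continuous_intros)

lemma clamped_seq_mono:
  assumes "u \<le> v"
  shows "clamped_seq e u n \<le> clamped_seq e v n"
proof (induction n)
  case 0
  then show ?case
    using assms by (simp add: le_fun_def)
next
  case (Suc n)
  have "u (Suc n) \<le> v (Suc n)"
    using assms by (simp add: le_fun_def)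
  then show ?case
    unfolding clamped_seq.simps using Suc.IH
    by (intro max.mono min.mono add_right_mono diff_right_mono)
qed

lemma clamped_seq_step: "0 \<le> e n \<Longrightarrow> \<bar>clamped_seq e v (Suc n) - clamped_seq e v n\<bar> \<le> e n"
  by (simp add: max_def min_def abs_le_iff)

lemma clamped_seq_eq:
  assumes "\<And>n. \<bar>v (Suc n) - v n\<bar> \<le> e n"
  shows "clamped_seq e v n = v n"
proof (induction n)
  case (Suc n)
  then show ?case
    using assms[of n] by (simp add: max_def min_def abs_le_iff)
qed simp

lemma clamped_seq_limit:
  assumes "\<And>n. 0 \<le> e n" "summable e"
  obtains L where "continuous_on UNIV L" "\<And>v. clamped_seq e v \<longlonglongrightarrow> L v" "mono L"
proof -
  define d where "d n v = clamped_seq e v (Suc n) - clamped_seq e v n" for n v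
  have d_le: "norm (d n v) \<le> e n" for n v
    using clamped_seq_step[OF assms(1)] by (simp add: d_def)
  have "uniform_limit UNIV (\<lambda>N v. \<Sum>i<N. d i v) (\<lambda>v. \<Sum>i. d i v) sequentially"
    using d_le assms(2) by (rule Weierstrass_m_test)
  then have "continuous_on UNIV (\<lambda>v. \<Sum>i. d i v)"
    by (rule uniform_limit_theorem[rotated])
       (auto simp: d_def intro!: always_eventually continuous_intros continuous_on_clamped_seq)
  then have "continuous_on UNIV (\<lambda>v. v 0 + (\<Sum>i. d i v))"
    by (intro continuous_intros continuous_on_coordinate)
  moreover have "clamped_seq e v \<longlonglongrightarrow> v 0 + (\<Sum>i. d i v)" for v
  proof -
    have "summable (\<lambda>i. d i v)"
      using d_le assms(2) by (rule summable_comparison_test'[rotated])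
    then have "(\<lambda>N. v 0 + (\<Sum>i<N. d i v)) \<longlonglongrightarrow> v 0 + (\<Sum>i. d i v)"
      by (intro tendsto_add tendsto_const summable_LIMSEQ)
    moreover have "v 0 + (\<Sum>i<N. d i v) = clamped_seq e v N" for N
      unfolding d_def sum_lessThan_telescope by simp
    ultimately show ?thesis
      by simp
  qed
  moreover have "mono (\<lambda>v. v 0 + (\<Sum>i. d i v))"
  proof (rule monoI)
    fix u v :: "nat \<Rightarrow> real" assume "u \<le> v"
    then show "u 0 + (\<Sum>i. d i u) \<le> v 0 + (\<Sum>i. d i v)"
      using clamped_seq_mono by (intro LIMSEQ_le[OF calculation(2)[of u] calculation(2)[of v]]) blast
  qed
  ultimately show thesis
    by (rule that)
qed

lemma fast_seq_step:
  assumes "\<forall>n. \<bar>v n - x\<bar> \<le> (1/2)^n"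
  shows "\<bar>v (Suc n) - v n\<bar> \<le> 3 * (1/2::real)^Suc n"
proof -
  have "\<bar>v (Suc n) - v n\<bar> \<le> (1/2)^Suc n + (1/2)^n"
    using assms[rule_format, of n] assms[rule_format, of "Suc n"] by linarith
  also have "\<dots> = 3 * (1/2)^Suc n"
    by simp
  finally show ?thesis .
qed

text \<open>Clamping each step to the tolerance makes the limit depend continuously and monotonically
  on the whole sequence, while sequences converging at rate 2^-n are left untouched.\<close>
lemma exists_cont_mono_unit_fast_limit:
  "\<exists>\<Psi>. cont_mono_unit (cube UNIV) \<Psi>
      \<and> (\<forall>v x. x \<in> {0..1} \<longrightarrow> (\<forall>n. \<bar>v n - x\<bar> \<le> (1/2)^n) \<longrightarrow> \<Psi> v = x)"
proof -
  define e :: "nat \<Rightarrow> real" where "e n = 3 * (1/2)^Suc n" for n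
  have "summable e"
    unfolding e_def by (intro summable_mult summable_geometric_iff[THEN iffD2]) simp
  then obtain L where L: "continuous_on UNIV L" "\<And>v. clamped_seq e v \<longlonglongrightarrow> L v" "mono L"
    using clamped_seq_limit[of e] by (auto simp: e_def)
  define \<Psi> where "\<Psi> v = max 0 (min 1 (L v))" for v
  have "cont_mono_unit (cube UNIV) \<Psi>"
    unfolding cont_mono_unit_def
  proof (intro conjI)
    show "continuous_on (cube UNIV) \<Psi>"
      unfolding \<Psi>_def using continuous_on_subset[OF L(1)] by (intro continuous_intros) auto
    show "\<Psi> ` cube UNIV \<subseteq> {0..1}"
      by (auto simp: \<Psi>_def)
    show "mono_on (cube UNIV) \<Psi>"
      unfolding \<Psi>_def using L(3) by (auto intro!: mono_onI max.mono min.mono dest: monoD)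
  qed
  moreover have "\<Psi> v = x" if x: "x \<in> {0..1}" and fast: "\<forall>n. \<bar>v n - x\<bar> \<le> (1/2)^n" for v x
  proof -
    have "\<bar>v (Suc n) - v n\<bar> \<le> e n" for n
      using fast_seq_step[OF fast] by (simp add: e_def)
    then have "clamped_seq e v = v"
      using clamped_seq_eq by blast
    then have "v \<longlonglongrightarrow> L v"
      using L(2) by metis
    moreover have "(\<lambda>n. v n - x) \<longlonglongrightarrow> 0"
      using fast by (intro Lim_null_comparison[OF _ LIMSEQ_power_zero[of "1/2::real"]]) auto
    then have "v \<longlonglongrightarrow> x"
      by (simp add: LIM_zero_iff)
    ultimately have "L v = x"
      by (rule LIMSEQ_unique)
    then show ?thesis
      using x by (simp add: \<Psi>_def)
  qed
  ultimately show ?thesis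
    by blast
qed

lemma modal_representable_limit:
  fixes F :: "nat \<Rightarrow> 'b::{order,topological_space} set \<Rightarrow> real"
  assumes "\<And>n. modal_representable Z (F n)"
    and "\<And>n K. K \<in> Vc Z \<Longrightarrow> \<bar>F n K - f K\<bar> \<le> (1/2)^n"
    and "\<And>K. K \<in> Vc Z \<Longrightarrow> f K \<in> {0..1}"
  shows "modal_representable Z f"
proof -
  obtain \<Psi> where \<Psi>: "cont_mono_unit (cube UNIV) \<Psi>"
    "\<And>v x. x \<in> {0..1} \<Longrightarrow> \<forall>n. \<bar>v n - x\<bar> \<le> (1/2)^n \<Longrightarrow> \<Psi> v = x"
    using exists_cont_mono_unit_fast_limit by blast
  show ?thesis
  proof (rule modal_representable_cong[OF modal_representable_compose[OF assms(1) \<Psi>(1)]])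
    fix K assume "K \<in> Vc Z"
    then show "\<Psi> (\<lambda>n. F n K) = f K"
      using assms(2,3) by (intro \<Psi>(2)) auto
  qed
qed

lemma modal_representable_interpolates:
  fixes Z :: "('i \<Rightarrow> real) set"
  assumes "compact Z" "K \<in> Vc Z" "L \<in> Vc Z"
    and f_mono: "\<forall>K\<in>Vc Z. \<forall>L\<in>Vc Z. egli_milner Z K L \<longrightarrow> f K \<le> f L"
    and "f K \<in> {0..1}" "f L \<in> {0..1}"
  shows "\<exists>F. modal_representable Z F \<and> F K = f K \<and> F L \<le> f L"
proof (cases "f K \<le> f L")
  case True
  then show ?thesis
    using modal_representable_const[OF assms(5)] by (intro exI[of _ "\<lambda>_. f K"]) simp
next
  case False
  then have "\<not> egli_milner Z K L"
    using f_mono assms(2,3) by auto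
  then obtain h b where h: "cont_mono_unit Z h" "modal_atom h b K = 1" "modal_atom h b L = 0"
    using modal_atom_separates assms(1-3) by blast
  have "modal_representable Z (\<lambda>M. f L + (f K - f L) * modal_atom h b M)"
    using assms(5,6) False by (intro modal_representable_affine_atom[OF h(1)]) auto
  then show ?thesis
    using h(2,3) by (intro exI[of _ "\<lambda>M. f L + (f K - f L) * modal_atom h b M"]) simp
qed

lemma modal_representable_of_cont_mono:
  fixes Z :: "('i \<Rightarrow> real) set"
  assumes "compact Z" "order_convex Z"
    and f_cont: "continuous_map (Vc_top Z) (top_of_set {0..1}) f"
    and f_mono: "\<forall>K\<in>Vc Z. \<forall>L\<in>Vc Z. egli_milner Z K L \<longrightarrow> f K \<le> f L"
  shows "modal_representable Z f"
proof -
  have f_unit: "f K \<in> {0..1}" if "K \<in> Vc Z" for K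
    using continuous_map_image_subset_topspace[OF f_cont] that by (auto simp: topspace_Vc_top)
  have "\<exists>F. modal_representable Z F \<and> (\<forall>K\<in>Vc Z. \<bar>F K - f K\<bar> < (1/2)^n)" for n
  proof (rule lattice_approximation[of "Vc_top Z", unfolded topspace_Vc_top])
    show "compact_space (Vc_top Z)"
      using assms(1,2) by (rule compact_space_Vc_top)
    show "Vc Z \<noteq> {}"
      using empty_in_Vc by blast
    show "continuous_map (Vc_top Z) euclideanreal f"
      using f_cont by (simp add: continuous_map_in_subtopology)
    show "\<exists>F. modal_representable Z F \<and> F K = f K \<and> F L \<le> f L" if "K \<in> Vc Z" "L \<in> Vc Z" for K L
      using modal_representable_interpolates[OF assms(1) that f_mono f_unit f_unit] that by blast
  qed (auto intro: continuous_map_modal_representable[OF assms(1)]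
      modal_representable_min modal_representable_max)
  then obtain F where F: "\<And>n. modal_representable Z (F n) \<and> (\<forall>K\<in>Vc Z. \<bar>F n K - f K\<bar> < (1/2)^n)"
    by metis
  show ?thesis
    by (rule modal_representable_limit[of Z F]) (use F f_unit in \<open>auto intro: less_imp_le\<close>)
qed

theorem theorem5p14:
  fixes X :: "'a set"
    and f :: "('a \<Rightarrow> real) set \<Rightarrow> real"
  assumes f_cont: "continuous_map (Vc_top (cube X)) (top_of_set {0..1}) f"
    and f_mono: "\<forall>K\<in>Vc (cube X). \<forall>L\<in>Vc (cube X).
                   egli_milner (cube X) K L \<longrightarrow> f K \<le> f L"
  shows "\<exists>(Y :: nat set) (s :: (nat \<Rightarrow> real) \<Rightarrow> real)
            (h :: nat \<Rightarrow> ('a \<Rightarrow> real) \<Rightarrow> real) (isbox :: nat \<Rightarrow> bool).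
           countable Y
         \<and> continuous_map (top_of_set (cube Y)) (top_of_set {0..1}) s
         \<and> (\<forall>u\<in>cube Y. \<forall>v\<in>cube Y. u \<le> v \<longrightarrow> s u \<le> s v)
         \<and> (\<forall>y\<in>Y. continuous_map (top_of_set (cube X)) (top_of_set {0..1}) (h y)
                 \<and> (\<forall>u\<in>cube X. \<forall>v\<in>cube X. u \<le> v \<longrightarrow> h y u \<le> h y v))
         \<and> (\<forall>K\<in>Vc (cube X).
              f K = s (\<lambda>y. if y \<in> Y
                           then (if isbox y then box else diamond) (Vc_map (h y) K)
                           else 0))"
proof -
  obtain h b \<sigma> where h: "\<forall>j::nat. cont_mono_unit (cube X) (h j)"
    and \<sigma>: "cont_mono_unit (cube UNIV) \<sigma>"
    and f: "\<forall>K\<in>Vc (cube X). f K = \<sigma> (\<lambda>j. modal_atom (h j) (b j) K)"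
    using modal_representable_of_cont_mono[OF compact_cube order_convex_cube f_cont f_mono]
    unfolding modal_representable_def by blast
  have "continuous_map (top_of_set (cube UNIV)) (top_of_set {0..1}) \<sigma>"
    "\<forall>u\<in>cube UNIV. \<forall>v\<in>cube UNIV. u \<le> v \<longrightarrow> \<sigma> u \<le> \<sigma> v"
    using \<sigma> by (auto simp: cont_mono_unit_def image_subset_iff_funcset dest: mono_onD)
  moreover have "\<forall>y\<in>UNIV. continuous_map (top_of_set (cube X)) (top_of_set {0..1}) (h y)
      \<and> (\<forall>u\<in>cube X. \<forall>v\<in>cube X. u \<le> v \<longrightarrow> h y u \<le> h y v)"
    using h by (auto simp: cont_mono_unit_def image_subset_iff_funcset dest: mono_onD)
  moreover have "\<forall>K\<in>Vc (cube X). f K = \<sigma> (\<lambda>y. if y \<in> UNIV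
      then (if b y then box else diamond) (Vc_map (h y) K) else 0)"
    using f by (simp add: modal_atom_def)
  ultimately show ?thesis
    by (intro exI[of _ UNIV] exI[of _ \<sigma>] exI[of _ h] exI[of _ b] conjI countableI_type)
qed

end
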